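(* Let $\sigma$ be a 2-structure and $X\subsetneq V(\sigma)$ with $\sigma[X]$ prime; write $\overline{X}=V(\sigma)\setminus X$. Suppose Statement (S3) holds (there is no $Y\subseteq\overline{X}$ with $|Y|=3$ and $\sigma[X\cup Y]$ prime). Let $e,f\in E(\sigma)$ be distinct and $\alpha\in X$. If the outside graph $\Gamma_{(\sigma,\overline{X})}$ has no isolated vertices, then: (1) if $\langle X\rangle^{(e,f)}_\sigma\neq\emptyset$ and $\langle X\rangle^{(f,e)}_\sigma\neq\emptyset$, then $(x,y)\in e$ and $(y,x)\in f$ for all $x\in\langle X\rangle^{(e,f)}_\sigma$ and $y\in\langle X\rangle^{(f,e)}_\sigma$; (2) if $X^{(e,f)}_\sigma(\alpha)\neq\emptyset$ and $X^{(f,e)}_\sigma(\alpha)\neq\emptyset$, then $(x,y)\in e$ and $(y,x)\in f$ for all $x\in X^{(e,f)}_\sigma(\alpha)$ and $y\in X^{(f,e)}_\sigma(\alpha)$.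
   Context: A 2-structure $\sigma$ consists of a vertex set $V(\sigma)$ and an equivalence relation $\equiv_\sigma$ on ordered pairs of distinct vertices; $E(\sigma)$ is its set of classes; $\sigma[W]$ is the induced 2-structure on $W$. A module is a set $M$ such that for all $x,y\in M$ and $v\notin M$, $(x,v)\equiv_\sigma(y,v)$ and $(v,x)\equiv_\sigma(v,y)$; $\sigma$ is prime if $|V(\sigma)|\geq3$ and its only modules are $\emptyset$, $V(\sigma)$ and singletons. Given $\sigma[X]$ prime: $\langle X\rangle_\sigma=\{v\in\overline{X}: X\text{ is a module of }\sigma[X\cup\{v\}]\}$; for $\alpha\in X$, $X_\sigma(\alpha)=\{v\in\overline{X}:\{\alpha,v\}\text{ is a module of }\sigma[X\cup\{v\}]\}$. For $e,f\in E(\sigma)$: $\langle X\rangle^{(e,f)}_\sigma=\{v\in\langle X\rangle_\sigma:(v,\beta)\in e,(\beta,v)\in f\}$ for any $\beta\in X$; $X^{(e,f)}_\sigma(\alpha)=\{v\in X_\sigma(\alpha):(v,\alpha)\in e,(\alpha,v)\in f\}$. The outside graph $\Gamma_{(\sigma,\overline{X})}$ has vertex set $\overline{X}$ and edges the 2-element sets $Y\subseteq\overline{X}$ with $\sigma[X\cup Y]$ prime. *)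

theory Defs
  imports Main
begin

definition pairs :: "'a set \<Rightarrow> ('a \<times> 'a) set" where
  "pairs V = {(x, y). x \<in> V \<and> y \<in> V \<and> x \<noteq> y}"

definition two_structure :: "'a set \<Rightarrow> (('a \<times> 'a) \<times> ('a \<times> 'a)) set \<Rightarrow> bool" where
  "two_structure V R \<longleftrightarrow> equiv (pairs V) R"

definition classes :: "'a set \<Rightarrow> (('a \<times> 'a) \<times> ('a \<times> 'a)) set \<Rightarrow> ('a \<times> 'a) set set" where
  "classes V R = pairs V // R"

definition induced :: "(('a \<times> 'a) \<times> ('a \<times> 'a)) set \<Rightarrow> 'a set \<Rightarrow> (('a \<times> 'a) \<times> ('a \<times> 'a)) set" where
  "induced R W = R \<inter> (pairs W \<times> pairs W)"

definition is_module :: "'a set \<Rightarrow> (('a \<times> 'a) \<times> ('a \<times> 'a)) set \<Rightarrow> 'a set \<Rightarrow> bool" where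
  "is_module V R M \<longleftrightarrow> M \<subseteq> V \<and>
     (\<forall>x\<in>M. \<forall>y\<in>M. \<forall>v\<in>V - M. ((x, v), (y, v)) \<in> R \<and> ((v, x), (v, y)) \<in> R)"

definition prime_ts :: "'a set \<Rightarrow> (('a \<times> 'a) \<times> ('a \<times> 'a)) set \<Rightarrow> bool" where
  "prime_ts V R \<longleftrightarrow> (infinite V \<or> card V \<ge> 3) \<and>
     (\<forall>M. is_module V R M \<longrightarrow> M = {} \<or> M = V \<or> (\<exists>x. M = {x}))"

definition prime_on :: "'a set \<Rightarrow> (('a \<times> 'a) \<times> ('a \<times> 'a)) set \<Rightarrow> 'a set \<Rightarrow> bool" where
  "prime_on V R W \<longleftrightarrow> W \<subseteq> V \<and> prime_ts W (induced R W)"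

definition angle :: "'a set \<Rightarrow> (('a \<times> 'a) \<times> ('a \<times> 'a)) set \<Rightarrow> 'a set \<Rightarrow> 'a set" where
  "angle V R X = {v \<in> V - X. is_module (X \<union> {v}) (induced R (X \<union> {v})) X}"

definition Xalpha :: "'a set \<Rightarrow> (('a \<times> 'a) \<times> ('a \<times> 'a)) set \<Rightarrow> 'a set \<Rightarrow> 'a \<Rightarrow> 'a set" where
  "Xalpha V R X \<alpha> = {v \<in> V - X. is_module (X \<union> {v}) (induced R (X \<union> {v})) {\<alpha>, v}}"

text \<open>Angle X^(e,f): members v of angle X with (v,beta) in e and (beta,v) in f, for
(any, equivalently every) beta in X.\<close>
definition angle_ef :: "'a set \<Rightarrow> (('a \<times> 'a) \<times> ('a \<times> 'a)) set \<Rightarrow> 'a set \<Rightarrow>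
     ('a \<times> 'a) set \<Rightarrow> ('a \<times> 'a) set \<Rightarrow> 'a set" where
  "angle_ef V R X e f = {v \<in> angle V R X. \<forall>\<beta>\<in>X. (v, \<beta>) \<in> e \<and> (\<beta>, v) \<in> f}"

definition Xalpha_ef :: "'a set \<Rightarrow> (('a \<times> 'a) \<times> ('a \<times> 'a)) set \<Rightarrow> 'a set \<Rightarrow> 'a \<Rightarrow>
     ('a \<times> 'a) set \<Rightarrow> ('a \<times> 'a) set \<Rightarrow> 'a set" where
  "Xalpha_ef V R X \<alpha> e f = {v \<in> Xalpha V R X \<alpha>. (v, \<alpha>) \<in> e \<and> (\<alpha>, v) \<in> f}"

definition outside_edge :: "'a set \<Rightarrow> (('a \<times> 'a) \<times> ('a \<times> 'a)) set \<Rightarrow> 'a set \<Rightarrow> 'a \<Rightarrow> 'a \<Rightarrow> bool" where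
  "outside_edge V R X u w \<longleftrightarrow> u \<in> V - X \<and> w \<in> V - X \<and> u \<noteq> w \<and> prime_on V R (X \<union> {u, w})"

end

theory Submission
  imports Defs
begin

text \<open>
  The engine is the extension lemma: if \<open>\<sigma>[W]\<close> is prime and \<open>\<sigma>[W \<union> {v}]\<close> is not,
  then \<open>W\<close> or some \<open>{\<gamma>, v}\<close> with \<open>\<gamma> \<in> W\<close> is a module of \<open>\<sigma>[W \<union> {v}]\<close>.
  For \<open>x\<close>, \<open>y\<close> as in the statement, \<open>\<sigma>[X \<union> {x, y}]\<close> has an evident nontrivial module
  (\<open>X\<close>, resp. \<open>{\<alpha>, x, y}\<close>), so the outside neighbour \<open>z\<close> of \<open>y\<close> differs from \<open>x\<close>, and
  by (S3) the extension lemma applies to \<open>W = X \<union> {y, z}\<close> and \<open>v = x\<close>. Either the module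
  carries the colours of \<open>(x, \<alpha>)\<close>, \<open>(\<alpha>, x)\<close> (or of \<open>(\<gamma>, y)\<close>, \<open>(y, \<gamma>)\<close>) over to
  \<open>(x, y)\<close>, \<open>(y, x)\<close>; or it would force \<open>e = f\<close>; or \<open>x\<close> is a twin of \<open>z\<close> (or of a
  second vertex of \<open>X\<close>), and then the evident module of \<open>\<sigma>[X \<union> {x, y}]\<close> turns into a
  nontrivial module of the prime \<open>\<sigma>[X \<union> {y, z}]\<close> (or of \<open>\<sigma>[X]\<close>).
\<close>

text \<open>\<open>module_in R T M\<close>: \<open>M\<close> is a module of \<open>\<sigma>[T]\<close>, stated without forming the induced
  relation (see \<open>is_module_induced_iff\<close>).\<close>

definition module_in :: "(('a \<times> 'a) \<times> ('a \<times> 'a)) set \<Rightarrow> 'a set \<Rightarrow> 'a set \<Rightarrow> bool" where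
  "module_in R T M \<longleftrightarrow> M \<subseteq> T \<and>
     (\<forall>a\<in>M. \<forall>b\<in>M. \<forall>v\<in>T - M. ((a, v), (b, v)) \<in> R \<and> ((v, a), (v, b)) \<in> R)"

lemma module_inI:
  assumes "M \<subseteq> T"
    and "\<And>a b v. a \<in> M \<Longrightarrow> b \<in> M \<Longrightarrow> v \<in> T - M \<Longrightarrow> ((a, v), (b, v)) \<in> R \<and> ((v, a), (v, b)) \<in> R"
  shows "module_in R T M"
  using assms unfolding module_in_def by blast

lemma module_inD:
  assumes "module_in R T M" "a \<in> M" "b \<in> M" "v \<in> T" "v \<notin> M"
  shows "((a, v), (b, v)) \<in> R" "((v, a), (v, b)) \<in> R"
  using assms unfolding module_in_def by blast+

lemma module_in_subset: "module_in R T M \<Longrightarrow> M \<subseteq> T"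
  unfolding module_in_def by blast

lemma module_in_restrict: "module_in R T M \<Longrightarrow> S \<subseteq> T \<Longrightarrow> module_in R S (M \<inter> S)"
  unfolding module_in_def by blast

lemma module_in_Un_ambient:
  "module_in R S M \<Longrightarrow> module_in R T M \<Longrightarrow> module_in R (S \<union> T) M"
  unfolding module_in_def by blast

lemma exists_third_element:
  assumes "infinite A \<or> 3 \<le> card A"
  shows "\<exists>d\<in>A. d \<noteq> a \<and> d \<noteq> b"
proof (rule ccontr)
  assume "\<not> ?thesis"
  then have "A \<subseteq> {a, b}" by blast
  then have "finite A" "card A \<le> card {a, b}" by (auto intro: finite_subset card_mono)
  moreover have "card {a, b} \<le> 2" by (simp add: card_insert_le_m1)
  ultimately show False using assms by linarith
qed

lemma is_module_induced_iff: "is_module T (induced R T) M \<longleftrightarrow> module_in R T M"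
  unfolding is_module_def module_in_def induced_def pairs_def by fastforce

lemma prime_on_iff:
  "prime_on V R W \<longleftrightarrow> W \<subseteq> V \<and> (infinite W \<or> 3 \<le> card W) \<and>
     (\<forall>M. module_in R W M \<longrightarrow> M = {} \<or> M = W \<or> (\<exists>x. M = {x}))"
  by (simp add: prime_on_def prime_ts_def is_module_induced_iff)

lemma prime_on_exists_other: "prime_on V R W \<Longrightarrow> \<exists>d\<in>W. d \<noteq> a \<and> d \<noteq> b"
  by (rule exists_third_element) (simp add: prime_on_iff)

lemma prime_on_no_proper_module:
  assumes "prime_on V R W" "module_in R W M" "a \<in> M" "b \<in> M" "a \<noteq> b" "c \<in> W" "c \<notin> M"
  shows False
proof -
  have "M = {} \<or> M = W \<or> (\<exists>x. M = {x})"
    using assms(1,2) unfolding prime_on_iff by blast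
  then show False using assms(3-7) by blast
qed

lemma prime_on_insert_cases:
  assumes W: "prime_on V R W" and v: "v \<in> V - W" and np: "\<not> prime_on V R (insert v W)"
  shows "module_in R (insert v W) W \<or> (\<exists>\<gamma>\<in>W. module_in R (insert v W) {\<gamma>, v})"
proof -
  have WV: "W \<subseteq> V" and size: "infinite W \<or> 3 \<le> card W"
    and W_modules: "\<And>M. module_in R W M \<Longrightarrow> M = {} \<or> M = W \<or> (\<exists>x. M = {x})"
    using W unfolding prime_on_iff by auto
  have "infinite (insert v W) \<or> 3 \<le> card (insert v W)"
    using size v by auto
  then obtain M where M: "module_in R (insert v W) M" "M \<noteq> {}" "M \<noteq> insert v W" "\<And>x. M \<noteq> {x}"
    using np WV v unfolding prime_on_iff by auto
  have Ms: "M \<subseteq> insert v W" using M(1) module_in_subset by blast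
  have "M \<inter> W = {} \<or> M \<inter> W = W \<or> (\<exists>\<gamma>. M \<inter> W = {\<gamma>})"
    using W_modules module_in_restrict[OF M(1), of W] by blast
  then show ?thesis
  proof (elim disjE exE)
    assume "M \<inter> W = {}"
    then have "M \<subseteq> {v}" using Ms by blast
    then show ?thesis using M(2,4) by (metis subset_singletonD)
  next
    assume "M \<inter> W = W"
    then have "M = W" using Ms M(3) v by blast
    then show ?thesis using M(1) by blast
  next
    fix \<gamma> assume \<gamma>: "M \<inter> W = {\<gamma>}"
    then have "v \<in> M" using Ms M(4) by blast
    then have "M = {\<gamma>, v}" using \<gamma> Ms by blast
    then show ?thesis using M(1) \<gamma> by blast
  qed
qed

lemma outside_edge_other_end:
  "outside_edge V R X y z \<Longrightarrow> \<not> prime_on V R (X \<union> {x, y}) \<Longrightarrow> z \<noteq> x"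
  unfolding outside_edge_def by (auto simp: insert_commute)

lemma outside_edge_extension_cases:
  assumes S3: "\<not> (\<exists>Y. Y \<subseteq> V - X \<and> card Y = 3 \<and> prime_on V R (X \<union> Y))"
    and edge: "outside_edge V R X y z"
    and x: "x \<in> V - X" "x \<noteq> y" "x \<noteq> z"
  shows "module_in R (insert x (X \<union> {y, z})) (X \<union> {y, z})
    \<or> (\<exists>\<gamma>\<in>X \<union> {y, z}. module_in R (insert x (X \<union> {y, z})) {\<gamma>, x})"
proof -
  have W: "prime_on V R (X \<union> {y, z})" and yz: "y \<in> V - X" "z \<in> V - X" "y \<noteq> z"
    using edge unfolding outside_edge_def by auto
  have "card {x, y, z} = 3" "{x, y, z} \<subseteq> V - X"
    using x yz by auto
  moreover have "X \<union> {x, y, z} = insert x (X \<union> {y, z})" by blast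
  ultimately have "\<not> prime_on V R (insert x (X \<union> {y, z}))"
    using S3 by metis
  then show ?thesis
    using prime_on_insert_cases[OF W] x by blast
qed

locale two_struct =
  fixes V :: "'a set" and R :: "(('a \<times> 'a) \<times> ('a \<times> 'a)) set"
  assumes two_structure: "two_structure V R"
begin

lemma equiv_R: "equiv (pairs V) R"
  using two_structure unfolding two_structure_def .

lemma R_sym: "(p, q) \<in> R \<Longrightarrow> (q, p) \<in> R"
  using equiv_R by (meson equivE symD)

lemma R_trans: "(p, q) \<in> R \<Longrightarrow> (q, r) \<in> R \<Longrightarrow> (p, r) \<in> R"
  using equiv_R by (meson equivE transD)

lemma R_common_target: "(p, r) \<in> R \<Longrightarrow> (q, r) \<in> R \<Longrightarrow> (p, q) \<in> R"
  using R_sym R_trans by blast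

lemma in_class_iff:
  assumes e: "e \<in> classes V R" and p: "p \<in> e"
  shows "q \<in> e \<longleftrightarrow> (p, q) \<in> R"
proof
  show "q \<in> e \<Longrightarrow> (p, q) \<in> R"
    using in_quotient_imp_in_rel[OF equiv_R e[unfolded classes_def]] p by blast
  show "(p, q) \<in> R \<Longrightarrow> q \<in> e"
    using in_quotient_imp_closed[OF equiv_R e[unfolded classes_def] p] .
qed

lemma classes_disjoint:
  "e \<in> classes V R \<Longrightarrow> f \<in> classes V R \<Longrightarrow> e \<noteq> f \<Longrightarrow> p \<in> e \<Longrightarrow> p \<notin> f"
  using quotient_disj[OF equiv_R] unfolding classes_def by blast

lemma module_in_Un:
  assumes M: "module_in R T M" and N: "module_in R T N" and c: "c \<in> M \<inter> N"
  shows "module_in R T (M \<union> N)"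
proof (rule module_inI)
  show "M \<union> N \<subseteq> T" using M N module_in_subset by blast
  fix a b v assume "a \<in> M \<union> N" "b \<in> M \<union> N" "v \<in> T - (M \<union> N)"
  moreover have "((a, v), (c, v)) \<in> R \<and> ((v, a), (v, c)) \<in> R" if "a \<in> M \<union> N" "v \<in> T - (M \<union> N)" for a
    using that c module_inD[OF M] module_inD[OF N] by blast
  ultimately show "((a, v), (b, v)) \<in> R \<and> ((v, a), (v, b)) \<in> R"
    using R_common_target by blast
qed

lemma module_in_insert_twin_outside:
  assumes M: "module_in R T M" and x: "x \<in> T - M" and z: "z \<notin> M"
    and zx: "module_in R (insert z T) {z, x}"
  shows "module_in R (insert z T) M"
proof (rule module_inI)
  show "M \<subseteq> insert z T" using M module_in_subset by blast
  fix a b v assume a: "a \<in> M" and b: "b \<in> M" and v: "v \<in> insert z T - M"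
  show "((a, v), (b, v)) \<in> R \<and> ((v, a), (v, b)) \<in> R"
  proof (cases "v = z")
    case True
    have "c \<in> insert z T" "c \<notin> {z, x}" if "c \<in> M" for c
      using that x z module_in_subset[OF M] by auto
    then have "((z, a), (x, a)) \<in> R" "((a, z), (a, x)) \<in> R" "((z, b), (x, b)) \<in> R" "((b, z), (b, x)) \<in> R"
      using module_inD[OF zx, of z x a] module_inD[OF zx, of z x b] a b by auto
    moreover have "((a, x), (b, x)) \<in> R" "((x, a), (x, b)) \<in> R"
      using module_inD[OF M a b] x by blast+
    ultimately show ?thesis using True R_common_target by blast
  next
    case False
    then show ?thesis using module_inD[OF M a b] v by blast
  qed
qed

lemma module_in_insert_twin_inside:
  assumes M: "module_in R T M" and x: "x \<in> M"
    and zx: "module_in R (insert z T) {z, x}"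
  shows "module_in R (insert z T) (insert z M)"
proof (rule module_inI)
  show "insert z M \<subseteq> insert z T" using M module_in_subset by blast
  fix a b v assume a: "a \<in> insert z M" and b: "b \<in> insert z M" and v: "v \<in> insert z T - insert z M"
  have "((c, v), (x, v)) \<in> R \<and> ((v, c), (v, x)) \<in> R" if "c \<in> insert z M" for c
    using that module_inD[OF zx, of z x v] module_inD[OF M _ x, of c v] v x by auto
  then show "((a, v), (b, v)) \<in> R \<and> ((v, a), (v, b)) \<in> R"
    using a b R_common_target by blast
qed

lemma module_in_pairs_merge:
  assumes x: "module_in R (insert x T) {\<alpha>, x}" and y: "module_in R (insert y T) {\<alpha>, y}"
  shows "module_in R (insert x (insert y T)) {\<alpha>, x, y}"
proof (rule module_inI)
  show "{\<alpha>, x, y} \<subseteq> insert x (insert y T)"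
    using module_in_subset[OF x] module_in_subset[OF y] by blast
  fix a b v assume a: "a \<in> {\<alpha>, x, y}" and b: "b \<in> {\<alpha>, x, y}"
    and v: "v \<in> insert x (insert y T) - {\<alpha>, x, y}"
  have x_v: "((x, v), (\<alpha>, v)) \<in> R" "((v, x), (v, \<alpha>)) \<in> R"
    using module_inD[OF x, of x \<alpha> v] v by auto
  have y_v: "((y, v), (\<alpha>, v)) \<in> R" "((v, y), (v, \<alpha>)) \<in> R"
    using module_inD[OF y, of y \<alpha> v] v by auto
  have "((\<alpha>, v), (\<alpha>, v)) \<in> R" "((v, \<alpha>), (v, \<alpha>)) \<in> R"
    using x_v R_sym R_trans by blast+
  then have "((c, v), (\<alpha>, v)) \<in> R \<and> ((v, c), (v, \<alpha>)) \<in> R" if "c \<in> {\<alpha>, x, y}" for c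
    using that x_v y_v by auto
  then show "((a, v), (b, v)) \<in> R \<and> ((v, a), (v, b)) \<in> R"
    using a b R_common_target by blast
qed

lemma angle_ef_cross:
  assumes X: "prime_on V R X"
    and S3: "\<not> (\<exists>Y. Y \<subseteq> V - X \<and> card Y = 3 \<and> prime_on V R (X \<union> Y))"
    and e: "e \<in> classes V R" and f: "f \<in> classes V R" and ef: "e \<noteq> f"
    and edge: "outside_edge V R X y z"
    and x_in: "x \<in> angle_ef V R X e f" and y_in: "y \<in> angle_ef V R X f e"
  shows "(x, y) \<in> e \<and> (y, x) \<in> f"
proof -
  have x: "x \<in> V - X" "module_in R (insert x X) X" "\<And>\<beta>. \<beta> \<in> X \<Longrightarrow> (x, \<beta>) \<in> e \<and> (\<beta>, x) \<in> f"
    using x_in is_module_induced_iff[of "X \<union> {x}"] unfolding angle_ef_def angle_def by auto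
  have y: "y \<in> V - X" "module_in R (insert y X) X" "\<And>\<beta>. \<beta> \<in> X \<Longrightarrow> (y, \<beta>) \<in> f \<and> (\<beta>, y) \<in> e"
    using y_in is_module_induced_iff[of "X \<union> {y}"] unfolding angle_ef_def angle_def by auto
  obtain \<alpha> where "\<alpha> \<in> X" using prime_on_exists_other[OF X] by blast
  moreover obtain \<beta> where "\<beta> \<in> X" "\<alpha> \<noteq> \<beta>" using prime_on_exists_other[OF X, of \<alpha> \<alpha>] by blast
  ultimately have \<alpha>\<beta>: "\<alpha> \<in> X" "\<beta> \<in> X" "\<alpha> \<noteq> \<beta>" by blast+
  have "x \<noteq> y" using x(3) y(3) \<alpha>\<beta>(1) classes_disjoint[OF e f ef] by blast
  have X_module: "module_in R (X \<union> {x, y}) X"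
    using module_in_Un_ambient[OF x(2) y(2)] by (simp add: insert_commute)
  have W: "prime_on V R (X \<union> {y, z})" and z: "z \<in> V - X"
    using edge unfolding outside_edge_def by auto
  have "\<not> prime_on V R (X \<union> {x, y})"
    using prime_on_no_proper_module[OF _ X_module \<alpha>\<beta>] y(1) by blast
  then have "x \<noteq> z" using outside_edge_other_end[OF edge] by blast
  with outside_edge_extension_cases[OF S3 edge x(1) \<open>x \<noteq> y\<close>]
  consider (W_module) "module_in R (insert x (X \<union> {y, z})) (X \<union> {y, z})"
    | (twin) \<gamma> where "\<gamma> \<in> X \<union> {y, z}" "module_in R (insert x (X \<union> {y, z})) {\<gamma>, x}"
    by blast
  then show ?thesis
  proof cases
    case W_module
    then have "((x, \<alpha>), (x, y)) \<in> R" "((\<alpha>, x), (y, x)) \<in> R"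
      using module_inD[OF W_module, of \<alpha> y x] \<alpha>\<beta>(1) x(1) \<open>x \<noteq> y\<close> \<open>x \<noteq> z\<close> by auto
    then show ?thesis using x(3)[OF \<alpha>\<beta>(1)] in_class_iff[OF e] in_class_iff[OF f] by blast
  next
    case (twin \<gamma>)
    consider "\<gamma> \<in> X" | "\<gamma> = y" | "\<gamma> = z" using twin(1) by blast
    then show ?thesis
    proof cases
      case 1
      then have "((\<gamma>, y), (x, y)) \<in> R" "((y, \<gamma>), (y, x)) \<in> R"
        using module_inD[OF twin(2), of \<gamma> x y] x(1) y(1) \<open>x \<noteq> y\<close> by auto
      then show ?thesis using y(3)[OF 1] in_class_iff[OF e] in_class_iff[OF f] by blast
    next
      case 2
      then have "((y, \<alpha>), (x, \<alpha>)) \<in> R"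
        using module_inD[OF twin(2), of y x \<alpha>] \<alpha>\<beta>(1) x(1) y(1) by auto
      then show ?thesis
        using x(3) y(3) \<alpha>\<beta>(1) in_class_iff[OF f] classes_disjoint[OF e f ef] by blast
    next
      case 3
      have "module_in R (insert z (X \<union> {x, y})) {z, x}"
        using twin(2) 3 by (simp add: insert_commute)
      then have "module_in R (insert z (X \<union> {x, y})) X"
        using module_in_insert_twin_outside[OF X_module] x(1) z by blast
      moreover have "X \<union> {y, z} \<subseteq> insert z (X \<union> {x, y})" "X \<inter> (X \<union> {y, z}) = X" by blast+
      ultimately have "module_in R (X \<union> {y, z}) X" by (metis module_in_restrict)
      then show ?thesis
        using prime_on_no_proper_module[OF W _ \<alpha>\<beta>] y(1) by blast
    qed
  qed
qed

lemma Xalpha_ef_cross: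
  assumes X: "prime_on V R X"
    and S3: "\<not> (\<exists>Y. Y \<subseteq> V - X \<and> card Y = 3 \<and> prime_on V R (X \<union> Y))"
    and e: "e \<in> classes V R" and f: "f \<in> classes V R" and ef: "e \<noteq> f"
    and \<alpha>: "\<alpha> \<in> X" and edge: "outside_edge V R X y z"
    and x_in: "x \<in> Xalpha_ef V R X \<alpha> e f" and y_in: "y \<in> Xalpha_ef V R X \<alpha> f e"
  shows "(x, y) \<in> e \<and> (y, x) \<in> f"
proof -
  have x: "x \<in> V - X" "module_in R (insert x X) {\<alpha>, x}" "(x, \<alpha>) \<in> e" "(\<alpha>, x) \<in> f"
    using x_in is_module_induced_iff[of "X \<union> {x}"] unfolding Xalpha_ef_def Xalpha_def by auto
  have y: "y \<in> V - X" "module_in R (insert y X) {\<alpha>, y}" "(y, \<alpha>) \<in> f" "(\<alpha>, y) \<in> e"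
    using y_in is_module_induced_iff[of "X \<union> {y}"] unfolding Xalpha_ef_def Xalpha_def by auto
  obtain \<beta> where \<beta>: "\<beta> \<in> X" "\<beta> \<noteq> \<alpha>" using prime_on_exists_other[OF X, of \<alpha> \<alpha>] by blast
  have "x \<noteq> y" using x(3) y(3) classes_disjoint[OF e f ef] by blast
  have M: "module_in R (X \<union> {x, y}) {\<alpha>, x, y}"
    using module_in_pairs_merge[OF x(2) y(2)] by (simp add: insert_commute)
  have W: "prime_on V R (X \<union> {y, z})" and z: "z \<in> V - X"
    using edge unfolding outside_edge_def by auto
  have "\<not> prime_on V R (X \<union> {x, y})"
    using prime_on_no_proper_module[OF _ M, where a = \<alpha> and b = x and c = \<beta>] \<alpha> \<beta> x(1) y(1) by blast
  then have "x \<noteq> z" using outside_edge_other_end[OF edge] by blast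
  with outside_edge_extension_cases[OF S3 edge x(1) \<open>x \<noteq> y\<close>]
  consider (W_module) "module_in R (insert x (X \<union> {y, z})) (X \<union> {y, z})"
    | (twin) \<gamma> where "\<gamma> \<in> X \<union> {y, z}" "module_in R (insert x (X \<union> {y, z})) {\<gamma>, x}"
    by blast
  then show ?thesis
  proof cases
    case W_module
    then have "((x, \<alpha>), (x, y)) \<in> R" "((\<alpha>, x), (y, x)) \<in> R"
      using module_inD[OF W_module, of \<alpha> y x] \<alpha> x(1) \<open>x \<noteq> y\<close> \<open>x \<noteq> z\<close> by auto
    then show ?thesis using x(3,4) in_class_iff[OF e] in_class_iff[OF f] by blast
  next
    case (twin \<gamma>)
    consider "\<gamma> = \<alpha>" | "\<gamma> \<in> X" "\<gamma> \<noteq> \<alpha>" | "\<gamma> = y" | "\<gamma> = z" using twin(1) by blast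
    then show ?thesis
    proof cases
      case 1
      then have "((\<alpha>, y), (x, y)) \<in> R" "((y, \<alpha>), (y, x)) \<in> R"
        using module_inD[OF twin(2), of \<alpha> x y] x(1) y(1) \<open>x \<noteq> y\<close> \<alpha> by auto
      then show ?thesis using y(3,4) in_class_iff[OF e] in_class_iff[OF f] by blast
    next
      case 2
      have "insert x X \<subseteq> insert x (X \<union> {y, z})" "{\<gamma>, x} \<inter> insert x X = {\<gamma>, x}"
        using 2 by blast+
      then have "module_in R (insert x X) {\<gamma>, x}"
        using module_in_restrict[OF twin(2)] by metis
      then have "module_in R (insert x X) ({\<alpha>, x} \<union> {\<gamma>, x})"
        using module_in_Un[OF x(2)] by blast
      moreover have "({\<alpha>, x} \<union> {\<gamma>, x}) \<inter> X = {\<alpha>, \<gamma>}"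
        using \<alpha> 2 x(1) by blast
      ultimately have "module_in R X {\<alpha>, \<gamma>}"
        using module_in_restrict[of R "insert x X" _ X] by (metis subset_insertI)
      moreover obtain d where "d \<in> X" "d \<noteq> \<alpha>" "d \<noteq> \<gamma>"
        using prime_on_exists_other[OF X] by blast
      ultimately show ?thesis
        using prime_on_no_proper_module[OF X, of "{\<alpha>, \<gamma>}" \<alpha> \<gamma> d] 2 by blast
    next
      case 3
      then have "((y, \<alpha>), (x, \<alpha>)) \<in> R"
        using module_inD[OF twin(2), of y x \<alpha>] \<alpha> x(1) y(1) by auto
      then show ?thesis
        using x(3) y(3) in_class_iff[OF f] classes_disjoint[OF e f ef] by blast
    next
      case 4
      have "module_in R (insert z (X \<union> {x, y})) {z, x}"
        using twin(2) 4 by (simp add: insert_commute)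
      then have "module_in R (insert z (X \<union> {x, y})) (insert z {\<alpha>, x, y})"
        using module_in_insert_twin_inside[OF M] by blast
      moreover have "X \<union> {y, z} \<subseteq> insert z (X \<union> {x, y})"
        "insert z {\<alpha>, x, y} \<inter> (X \<union> {y, z}) = {\<alpha>, y, z}"
        using \<alpha> x(1) \<open>x \<noteq> y\<close> \<open>x \<noteq> z\<close> by blast+
      ultimately have "module_in R (X \<union> {y, z}) {\<alpha>, y, z}" by (metis module_in_restrict)
      then show ?thesis
        using prime_on_no_proper_module[OF W, of "{\<alpha>, y, z}" \<alpha> y \<beta>] \<alpha> \<beta> y(1) z by blast
    qed
  qed
qed

end

theorem lemma3p7:
  fixes V :: "'a set" and R :: "(('a \<times> 'a) \<times> ('a \<times> 'a)) set"
    and X :: "'a set" and e f :: "('a \<times> 'a) set" and \<alpha> :: 'a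
  assumes ts: "two_structure V R"
    and XV: "X \<subset> V"
    and Xprime: "prime_on V R X"
    and S3: "\<not> (\<exists>Y. Y \<subseteq> V - X \<and> card Y = 3 \<and> prime_on V R (X \<union> Y))"
    and e: "e \<in> classes V R" and f: "f \<in> classes V R" and ef: "e \<noteq> f"
    and \<alpha>: "\<alpha> \<in> X"
    and noiso: "\<forall>u \<in> V - X. \<exists>w. outside_edge V R X u w"
  shows "(angle_ef V R X e f \<noteq> {} \<and> angle_ef V R X f e \<noteq> {} \<longrightarrow>
           (\<forall>x \<in> angle_ef V R X e f. \<forall>y \<in> angle_ef V R X f e. (x, y) \<in> e \<and> (y, x) \<in> f))
       \<and> (Xalpha_ef V R X \<alpha> e f \<noteq> {} \<and> Xalpha_ef V R X \<alpha> f e \<noteq> {} \<longrightarrow>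
           (\<forall>x \<in> Xalpha_ef V R X \<alpha> e f. \<forall>y \<in> Xalpha_ef V R X \<alpha> f e. (x, y) \<in> e \<and> (y, x) \<in> f))"
proof -
  interpret two_struct V R using ts by (rule two_struct.intro)
  show ?thesis
  proof (rule conjI; intro impI ballI)
    fix x y assume x: "x \<in> angle_ef V R X e f" and y: "y \<in> angle_ef V R X f e"
    then obtain z where "outside_edge V R X y z"
      using noiso unfolding angle_ef_def angle_def by blast
    then show "(x, y) \<in> e \<and> (y, x) \<in> f"
      using angle_ef_cross[OF Xprime S3 e f ef _ x y] by blast
  next
    fix x y assume x: "x \<in> Xalpha_ef V R X \<alpha> e f" and y: "y \<in> Xalpha_ef V R X \<alpha> f e"
    then obtain z where "outside_edge V R X y z"
      using noiso unfolding Xalpha_ef_def Xalpha_def by blast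
    then show "(x, y) \<in> e \<and> (y, x) \<in> f"
      using Xalpha_ef_cross[OF Xprime S3 e f ef \<alpha> _ x y] by blast
  qed
qed

end
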